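(* Let $Z=Z(t)$ be the unique formal power series in $t$ with $Z(0)=0$ and $Z=t(1+Z)^4/(1+Z^2)$, and let $\mu=\mu(t,u)$ be the unique formal power series in $t$ satisfying $$\mu=(u-1)\frac{(1+Z^2)(1+\mu Z)(1+\mu Z^2)(1+\mu Z^3)}{(1+Z)(1+Z+Z^2)(1-Z)^3(1-\mu Z^2)}.$$ Write $v=\frac{(u-1)Z(1+Z^2)}{(1+Z)(1+Z+Z^2)(1-Z)^3}$. Then $$\mu(t,u)=\frac{1}{Z^2}\left(\frac{2}{1+v(1-Z)^2/3+\frac23\sqrt{3+v^2(1-Z)^4}\,\cos(\phi/3)}-1\right),$$ where $\phi=\arccos\left(\dfrac{-9v(1+4Z+Z^2)+v^3(1-Z)^6}{(3+v^2(1-Z)^4)^{3/2}}\right)$. *)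

theory Defs
  imports "HOL-Analysis.Analysis" "HOL-Computational_Algebra.Formal_Power_Series"
begin

text \<open>The closed-form right-hand side, as a real function of the value z = Z(t)
  (and the parameter u).\<close>

definition v_of :: "real \<Rightarrow> real \<Rightarrow> real" where
  "v_of u z = (u - 1) * z * (1 + z^2) / ((1 + z) * (1 + z + z^2) * (1 - z)^3)"

definition phi_of :: "real \<Rightarrow> real \<Rightarrow> real" where
  "phi_of u z = (let v = v_of u z in
     arccos ((- 9 * v * (1 + 4 * z + z^2) + v^3 * (1 - z)^6)
             / (3 + v^2 * (1 - z)^4) powr (3/2)))"

definition mu_closed_form :: "real \<Rightarrow> real \<Rightarrow> real" where
  "mu_closed_form u z = (let v = v_of u z in
     (1 / z^2) * (2 / (1 + v * (1 - z)^2 / 3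
                       + (2/3) * sqrt (3 + v^2 * (1 - z)^4) * cos (phi_of u z / 3)) - 1))"

end

theory Submission
  imports Defs
begin

text \<open>Both series converge near \<open>t = 0\<close>: the truncated majorants
  \<open>\<Sum>n\<le>N. \<bar>c\<^sub>n\<bar> r\<^sup>n\<close> of \<open>Z\<close> and \<open>\<mu>\<close> stay bounded for a small \<open>r\<close>, by induction on \<open>N\<close>,
  because each defining equation expresses coefficient \<open>N + 1\<close> through lower ones.
  For the sums \<open>z\<close> and \<open>m\<close>, the substitution \<open>W = (1 - m z\<^sup>2) / (1 + m z\<^sup>2)\<close> turns the
  equation of \<open>\<mu>\<close> into the cubic \<open>W\<^sup>3 - s W\<^sup>2 - W + s ((1 + z) / (1 - z))\<^sup>2 = 0\<close> with
  \<open>s = v (1 - z)\<^sup>2\<close>, and the closed form is \<open>m\<close> recovered from the trigonometric (Viete) root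
  of this cubic. As \<open>t \<rightarrow> 0\<close> we have \<open>s \<rightarrow> 0\<close> and both roots tend to \<open>1\<close>, which is a simple
  root of \<open>W\<^sup>3 - W\<close>; so for small \<open>t\<close> the two roots coincide.\<close>

section \<open>Majorants of formal power series\<close>

definition fps_norm_sum :: "'a::real_normed_algebra_1 fps \<Rightarrow> nat \<Rightarrow> real \<Rightarrow> real" where
  "fps_norm_sum A N r = (\<Sum>n\<le>N. norm (fps_nth A n) * r ^ n)"

lemma fps_norm_sum_nonneg: "r \<ge> 0 \<Longrightarrow> fps_norm_sum A N r \<ge> 0"
  unfolding fps_norm_sum_def by (intro sum_nonneg) auto

lemma fps_norm_sum_add:
  assumes "fps_norm_sum A N r \<le> a" "fps_norm_sum B N r \<le> b" "r \<ge> 0"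
  shows "fps_norm_sum (A + B) N r \<le> a + b"
proof -
  have "fps_norm_sum (A + B) N r \<le> fps_norm_sum A N r + fps_norm_sum B N r"
    unfolding fps_norm_sum_def sum.distrib[symmetric] using \<open>r \<ge> 0\<close>
    by (intro sum_mono) (auto simp: distrib_right[symmetric] intro!: mult_right_mono norm_triangle_ineq)
  with assms show ?thesis by linarith
qed

lemma fps_norm_sum_uminus [simp]: "fps_norm_sum (- A) N r = fps_norm_sum A N r"
  by (simp add: fps_norm_sum_def)

lemma fps_norm_sum_diff:
  "fps_norm_sum A N r \<le> a \<Longrightarrow> fps_norm_sum B N r \<le> b \<Longrightarrow> r \<ge> 0 \<Longrightarrow> fps_norm_sum (A - B) N r \<le> a + b"
  using fps_norm_sum_add[of A N r a "- B" b] by simp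

lemma fps_norm_sum_const [simp]: "fps_norm_sum (fps_const c) N r = norm c"
  by (simp add: fps_norm_sum_def sum.atMost_shift)

lemma fps_norm_sum_0 [simp]: "fps_norm_sum 0 N r = 0"
  by (simp add: fps_norm_sum_def)

lemma fps_norm_sum_1 [simp]: "fps_norm_sum 1 N r = 1"
  using fps_norm_sum_const[of 1] by simp

lemma fps_norm_sum_X:
  assumes "r \<ge> 0"
  shows "fps_norm_sum fps_X N r \<le> r"
proof -
  have "fps_norm_sum fps_X N r = (\<Sum>n\<in>{..N} \<inter> {1}. r ^ n)"
    unfolding fps_norm_sum_def by (rule sum.mono_neutral_cong_right) (auto simp: fps_X_def)
  also have "\<dots> \<le> r"
    using assms by (cases N) auto
  finally show ?thesis .
qed

lemma fps_norm_sum_mult_triangle: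
  assumes "r \<ge> 0"
  shows "fps_norm_sum (A * B) N r
           \<le> (\<Sum>(i, j) | i + j \<le> N. (norm (fps_nth A i) * r ^ i) * (norm (fps_nth B j) * r ^ j))"
proof -
  have "norm (fps_nth (A * B) n) * r ^ n
          \<le> (\<Sum>i\<le>n. (norm (fps_nth A i) * r ^ i) * (norm (fps_nth B (n - i)) * r ^ (n - i)))" for n
  proof -
    have "norm (fps_nth (A * B) n) \<le> (\<Sum>i\<le>n. norm (fps_nth A i) * norm (fps_nth B (n - i)))"
      unfolding fps_mult_nth atLeast0AtMost
      by (rule order_trans[OF norm_sum sum_mono]) (rule norm_mult_ineq)
    then have "norm (fps_nth (A * B) n) * r ^ n
                 \<le> (\<Sum>i\<le>n. norm (fps_nth A i) * norm (fps_nth B (n - i))) * r ^ n"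
      using assms by (intro mult_right_mono) auto
    also have "\<dots> = (\<Sum>i\<le>n. (norm (fps_nth A i) * r ^ i) * (norm (fps_nth B (n - i)) * r ^ (n - i)))"
      unfolding sum_distrib_right
      by (intro sum.cong refl) (simp add: mult_ac flip: power_add)
    finally show ?thesis .
  qed
  then have "fps_norm_sum (A * B) N r
               \<le> (\<Sum>n\<le>N. \<Sum>i\<le>n. (norm (fps_nth A i) * r ^ i) * (norm (fps_nth B (n - i)) * r ^ (n - i)))"
    unfolding fps_norm_sum_def by (intro sum_mono)
  also have "\<dots> = (\<Sum>(i, j) | i + j \<le> N. (norm (fps_nth A i) * r ^ i) * (norm (fps_nth B j) * r ^ j))"
    by (rule sum.triangle_reindex_eq[symmetric])
  finally show ?thesis .
qed

lemma fps_norm_sum_mult_truncated: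
  assumes "r \<ge> 0"
    and "\<And>i j. i + j \<le> N \<Longrightarrow> fps_nth A i \<noteq> 0 \<Longrightarrow> fps_nth B j \<noteq> 0 \<Longrightarrow> i \<le> N1 \<and> j \<le> N2"
  shows "fps_norm_sum (A * B) N r \<le> fps_norm_sum A N1 r * fps_norm_sum B N2 r"
proof -
  let ?f = "\<lambda>(i, j). (norm (fps_nth A i) * r ^ i) * (norm (fps_nth B j) * r ^ j)"
  have fin: "finite {(i, j). i + j \<le> N}"
    by (rule finite_subset[of _ "{..N} \<times> {..N}"]) auto
  have "fps_norm_sum (A * B) N r \<le> sum ?f {(i, j). i + j \<le> N}"
    by (rule fps_norm_sum_mult_triangle[OF assms(1)])
  also have "\<dots> = sum ?f ({(i, j). i + j \<le> N} \<inter> ({..N1} \<times> {..N2}))"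
    using assms(2) by (intro sum.mono_neutral_right fin) auto
  also have "\<dots> \<le> sum ?f ({..N1} \<times> {..N2})"
    using assms(1) by (intro sum_mono2) auto
  also have "\<dots> = fps_norm_sum A N1 r * fps_norm_sum B N2 r"
    unfolding fps_norm_sum_def sum_product sum.cartesian_product by simp
  finally show ?thesis .
qed

lemma fps_norm_sum_mult:
  assumes "r \<ge> 0" "fps_norm_sum A N r \<le> a" "fps_norm_sum B N r \<le> b"
  shows "fps_norm_sum (A * B) N r \<le> a * b"
proof -
  have "fps_norm_sum (A * B) N r \<le> fps_norm_sum A N r * fps_norm_sum B N r"
    using assms(1) by (rule fps_norm_sum_mult_truncated) auto
  also have "\<dots> \<le> a * b"
    using assms fps_norm_sum_nonneg by (meson mult_mono order_trans)
  finally show ?thesis .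
qed

lemma fps_norm_sum_mult_Suc:
  assumes "r \<ge> 0" "fps_nth A 0 = 0" "fps_norm_sum A (Suc N) r \<le> a" "fps_norm_sum B N r \<le> b"
  shows "fps_norm_sum (A * B) (Suc N) r \<le> a * b"
proof -
  have "fps_norm_sum (A * B) (Suc N) r \<le> fps_norm_sum A (Suc N) r * fps_norm_sum B N r"
    using assms(1)
  proof (rule fps_norm_sum_mult_truncated)
    fix i j
    assume "i + j \<le> Suc N" "fps_nth A i \<noteq> 0" "fps_nth B j \<noteq> 0"
    with assms(2) show "i \<le> Suc N \<and> j \<le> N"
      by (cases i) auto
  qed
  also have "\<dots> \<le> a * b"
    using assms fps_norm_sum_nonneg by (meson mult_mono order_trans)
  finally show ?thesis .
qed

lemma fps_norm_sum_power:
  "r \<ge> 0 \<Longrightarrow> fps_norm_sum A N r \<le> a \<Longrightarrow> fps_norm_sum (A ^ n) N r \<le> a ^ n"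
  by (induction n) (auto intro!: fps_norm_sum_mult)

lemma fps_norm_sum_mult_minus_1:
  assumes "r \<ge> 0" "fps_norm_sum (A - 1) N r \<le> a - 1" "fps_norm_sum (B - 1) N r \<le> b - 1"
  shows "fps_norm_sum (A * B - 1) N r \<le> a * b - 1"
proof -
  have "A * B - 1 = (A - 1) * (B - 1) + (A - 1) + (B - 1)"
    by (simp add: algebra_simps)
  moreover have "fps_norm_sum ((A - 1) * (B - 1) + (A - 1) + (B - 1)) N r \<le> (a - 1) * (b - 1) + (a - 1) + (b - 1)"
    using assms by (intro fps_norm_sum_add fps_norm_sum_mult)
  ultimately show ?thesis
    by (simp add: algebra_simps)
qed

lemma fps_norm_sum_power_minus_1:
  assumes "r \<ge> 0" "fps_norm_sum (A - 1) N r \<le> a - 1"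
  shows "fps_norm_sum (A ^ n - 1) N r \<le> a ^ n - 1"
proof (induction n)
  case (Suc n)
  with assms show ?case
    using fps_norm_sum_mult_minus_1[of r A N a "A ^ n" "a ^ n"] by simp
qed simp

lemma fps_norm_sum_le_imp_conv_radius_ge:
  fixes A :: "'a::{real_normed_div_algebra, banach} fps"
  assumes "r \<ge> 0" "\<And>N. fps_norm_sum A N r \<le> B"
  shows "ereal r \<le> fps_conv_radius A"
proof -
  have "summable (\<lambda>n. norm (fps_nth A n) * r ^ n)"
    using assms by (intro bounded_imp_summable[of _ B]) (auto simp: fps_norm_sum_def)
  then have "norm r \<le> conv_radius (\<lambda>n. norm (fps_nth A n))"
    by (intro conv_radius_geI) simp
  then show ?thesis
    using assms(1) fps_conv_radius_norm[of A] by (simp add: fps_conv_radius_def)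
qed

section \<open>Positive radius of convergence\<close>

lemma fps_norm_sum_Z_le:
  fixes Z :: "real fps"
  assumes Z0: "fps_nth Z 0 = 0" and Z: "Z * (1 + Z^2) = fps_X * (1 + Z)^4"
    and \<zeta>: "0 < \<zeta>" "\<zeta> \<le> 1/2"
  shows "fps_norm_sum Z N (\<zeta> / 32) \<le> \<zeta>"
proof (induction N)
  case 0
  show ?case
    using Z0 \<zeta> by (simp add: fps_norm_sum_def)
next
  case (Suc N)
  define r where "r = \<zeta> / 32"
  define T where "T = fps_norm_sum Z (Suc N) r"
  have r: "r \<ge> 0"
    using \<zeta> by (simp add: r_def)
  have \<zeta>2: "\<zeta>^2 \<le> 1/4"
    using \<zeta> power_mono[of \<zeta> "1/2" 2] by (simp add: power_divide)
  have "fps_norm_sum ((1 + Z)^4) N r \<le> (1 + \<zeta>)^4"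
    using Suc r by (intro fps_norm_sum_power fps_norm_sum_add) (simp_all add: r_def)
  then have X: "fps_norm_sum (fps_X * (1 + Z)^4) (Suc N) r \<le> r * (1 + \<zeta>)^4"
    using r by (intro fps_norm_sum_mult_Suc fps_norm_sum_X) simp_all
  have Z3: "fps_norm_sum (Z * Z^2) (Suc N) r \<le> T * \<zeta>^2"
    using Suc r Z0 by (intro fps_norm_sum_mult_Suc fps_norm_sum_power) (simp_all add: T_def r_def)
  have "Z = fps_X * (1 + Z)^4 - Z * Z^2"
    using Z by (simp add: algebra_simps)
  then have "T = fps_norm_sum (fps_X * (1 + Z)^4 - Z * Z^2) (Suc N) r"
    unfolding T_def by (rule arg_cong)
  then have "T \<le> r * (1 + \<zeta>)^4 + T * \<zeta>^2"
    using fps_norm_sum_diff[OF X Z3 r] by simp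
  moreover have "r * (1 + \<zeta>)^4 \<le> \<zeta> * (1 - \<zeta>^2)"
  proof -
    have "(1 + \<zeta>)^4 \<le> (3/2)^4"
      using \<zeta> by (intro power_mono) auto
    then have "r * (1 + \<zeta>)^4 \<le> r * (3/2)^4"
      using r by (rule mult_left_mono)
    also have "\<dots> \<le> \<zeta> * (3/4)"
      using \<zeta> by (simp add: r_def power_divide)
    also have "\<dots> \<le> \<zeta> * (1 - \<zeta>^2)"
      using \<zeta> \<zeta>2 by (intro mult_left_mono) auto
    finally show ?thesis .
  qed
  moreover have "\<zeta>^2 < 1"
    using \<zeta>2 by simp
  ultimately have "T * (1 - \<zeta>^2) \<le> \<zeta> * (1 - \<zeta>^2)"
    by (simp add: algebra_simps)
  with \<open>\<zeta>^2 < 1\<close> show ?case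
    by (simp add: T_def r_def)
qed

lemma fps_norm_sum_mu_le:
  fixes Z \<mu> :: "real fps"
  assumes Z0: "fps_nth Z 0 = 0"
    and \<mu>: "\<mu> * ((1 + Z) * (1 + Z + Z^2) * (1 - Z)^3 * (1 - \<mu> * Z^2))
             = fps_const (u - 1) * (1 + Z^2) * (1 + \<mu> * Z) * (1 + \<mu> * Z^2) * (1 + \<mu> * Z^3)"
    and Z: "\<And>N. fps_norm_sum Z N r \<le> \<zeta>" and r: "r \<ge> 0"
  defines "M \<equiv> \<bar>u - 1\<bar> + 1" and "d \<equiv> (1 + \<zeta>) * (1 + (\<zeta> + \<zeta>^2)) * (1 + \<zeta>)^3 - 1"
  assumes small: "\<bar>u - 1\<bar> * ((1 + \<zeta>^2) * (1 + \<zeta> * M) * (1 + \<zeta> * (\<zeta> * M)) * (1 + \<zeta> * (\<zeta>^2 * M)) - 1)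
                   + \<zeta> * (M^2 * \<zeta> * (1 + d)) + d * M \<le> 1"
  shows "fps_norm_sum \<mu> N r \<le> M"
proof -
  txt \<open>On the right of \<open>\<mu>_eq\<close> every occurrence of \<open>\<mu>\<close> has a cofactor without constant term
    (\<open>Z\<close> or \<open>D - 1\<close>), so coefficient \<open>N + 1\<close> is controlled by the coefficients up to \<open>N\<close>.
    \<open>D\<close> and \<open>P\<close> are written as products of factors \<open>1 + C\<close> so that
    \<open>fps_norm_sum_mult_minus_1\<close> bounds them factor by factor.\<close>
  define D where "D = (1 + Z) * (1 + (Z + Z^2)) * (1 + - Z)^3"
  define P where "P = (1 + Z^2) * (1 + Z * \<mu>) * (1 + Z * (Z * \<mu>)) * (1 + Z * (Z^2 * \<mu>))"
  have \<mu>_eq: "\<mu> = fps_const (u - 1) + fps_const (u - 1) * (P - 1) + Z * (\<mu>^2 * Z * D) - (D - 1) * \<mu>"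
    using \<mu> unfolding D_def P_def by algebra
  have D1: "fps_norm_sum (D - 1) n r \<le> d" for n
    unfolding D_def d_def using Z r
    by (intro fps_norm_sum_mult_minus_1 fps_norm_sum_power_minus_1; simp;
        intro fps_norm_sum_add fps_norm_sum_power) simp_all
  have D: "fps_norm_sum D n r \<le> 1 + d" for n
    using fps_norm_sum_add[OF fps_norm_sum_1[THEN eq_refl] D1 r] by simp
  have D0: "fps_nth (D - 1) 0 = 0"
    using Z0 by (simp add: D_def fps_nth_power_0)
  have "fps_nth \<mu> 0 = u - 1"
    using arg_cong[OF \<mu>, of "\<lambda>A. fps_nth A 0"] Z0 by (simp add: fps_nth_power_0)
  show ?thesis
  proof (induction N)
    case 0
    show ?case
      using \<open>fps_nth \<mu> 0 = u - 1\<close> by (simp add: fps_norm_sum_def M_def)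
  next
    case (Suc N)
    have P1: "fps_norm_sum (P - 1) (Suc N) r
                \<le> (1 + \<zeta>^2) * (1 + \<zeta> * M) * (1 + \<zeta> * (\<zeta> * M)) * (1 + \<zeta> * (\<zeta>^2 * M)) - 1"
      unfolding P_def using Z Z0 r Suc
      by (intro fps_norm_sum_mult_minus_1; simp;
          intro fps_norm_sum_mult_Suc fps_norm_sum_mult fps_norm_sum_power) simp_all
    have "fps_norm_sum \<mu> (Suc N) r
            \<le> \<bar>u - 1\<bar> + \<bar>u - 1\<bar> * ((1 + \<zeta>^2) * (1 + \<zeta> * M) * (1 + \<zeta> * (\<zeta> * M)) * (1 + \<zeta> * (\<zeta>^2 * M)) - 1)
              + \<zeta> * (M^2 * \<zeta> * (1 + d)) + d * M"
      using Z Z0 r Suc D D1 D0 P1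
      by (subst \<mu>_eq) (intro fps_norm_sum_add fps_norm_sum_diff fps_norm_sum_mult fps_norm_sum_mult_Suc
          fps_norm_sum_power; simp)
    also have "\<dots> \<le> M"
      using small by (simp add: M_def)
    finally show ?case .
  qed
qed

lemma fps_conv_radius_Z_mu_pos:
  fixes Z \<mu> :: "real fps"
  assumes Z0: "fps_nth Z 0 = 0" and Z: "Z * (1 + Z^2) = fps_X * (1 + Z)^4"
    and \<mu>: "\<mu> * ((1 + Z) * (1 + Z + Z^2) * (1 - Z)^3 * (1 - \<mu> * Z^2))
             = fps_const (u - 1) * (1 + Z^2) * (1 + \<mu> * Z) * (1 + \<mu> * Z^2) * (1 + \<mu> * Z^3)"
  shows "fps_conv_radius Z > 0 \<and> fps_conv_radius \<mu> > 0"
proof -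
  define M where "M = \<bar>u - 1\<bar> + 1"
  define d :: "real \<Rightarrow> real" where "d \<zeta> = (1 + \<zeta>) * (1 + (\<zeta> + \<zeta>^2)) * (1 + \<zeta>)^3 - 1" for \<zeta>
  define g where "g \<zeta> = \<bar>u - 1\<bar> * ((1 + \<zeta>^2) * (1 + \<zeta> * M) * (1 + \<zeta> * (\<zeta> * M)) * (1 + \<zeta> * (\<zeta>^2 * M)) - 1)
                      + \<zeta> * (M^2 * \<zeta> * (1 + d \<zeta>)) + d \<zeta> * M" for \<zeta>
  have "(g \<longlongrightarrow> g 0) (at_right 0)"
    unfolding g_def d_def by (intro tendsto_intros)
  then have "\<forall>\<^sub>F \<zeta> in at_right 0. g \<zeta> < 1"
    by (rule order_tendstoD) (simp add: g_def d_def)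
  moreover have "\<forall>\<^sub>F \<zeta> in at_right 0. \<zeta> \<in> {0<..<1/2::real}"
    by (rule eventually_at_right_real) simp
  ultimately obtain \<zeta> where "g \<zeta> < 1" "0 < \<zeta>" "\<zeta> \<le> 1/2"
    using eventually_happens'[OF trivial_limit_at_right_real eventually_conj] by fastforce
  define r where "r = \<zeta> / 32"
  have r: "r > 0"
    using \<open>0 < \<zeta>\<close> by (simp add: r_def)
  have ZB: "fps_norm_sum Z N r \<le> \<zeta>" for N
    unfolding r_def using Z0 Z \<open>0 < \<zeta>\<close> \<open>\<zeta> \<le> 1/2\<close> by (rule fps_norm_sum_Z_le)
  have "fps_norm_sum \<mu> N r \<le> M" for N
    unfolding M_def using Z0 \<mu> ZB r \<open>g \<zeta> < 1\<close>
    by (intro fps_norm_sum_mu_le) (auto simp: g_def d_def M_def)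
  with ZB r show ?thesis
    using fps_norm_sum_le_imp_conv_radius_ge[of r Z \<zeta>] fps_norm_sum_le_imp_conv_radius_ge[of r \<mu> M]
    by (auto intro: less_le_trans[rotated])
qed

section \<open>The cubic equation for \<open>\<mu>\<close>\<close>

lemma cubic_trigonometric_root:
  fixes m q :: real
  assumes "m > 0" "\<bar>q\<bar> \<le> 2 * m ^ 3"
  defines "y \<equiv> 2 * m * cos (arccos (- q / (2 * m ^ 3)) / 3)"
  shows "y ^ 3 - 3 * m ^ 2 * y + q = 0"
proof -
  define C where "C = cos (arccos (- q / (2 * m ^ 3)) / 3)"
  have "\<bar>- q / (2 * m ^ 3)\<bar> \<le> 1"
    using assms(1,2) by (simp add: abs_divide divide_le_eq_1)
  then have "cos (3 * (arccos (- q / (2 * m ^ 3)) / 3)) = - q / (2 * m ^ 3)"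
    by (simp add: cos_arccos_abs)
  then have "4 * C ^ 3 - 3 * C = - q / (2 * m ^ 3)"
    unfolding C_def cos_treble_cos .
  then have "2 * m ^ 3 * (4 * C ^ 3 - 3 * C) = - q"
    using assms(1) by (simp add: field_simps)
  then show ?thesis
    unfolding y_def C_def[symmetric] by (simp add: algebra_simps power3_eq_cube power2_eq_square)
qed

lemma power2_powr_three_halves:
  fixes x :: real
  assumes "x \<ge> 0"
  shows "(x^2) powr (3/2) = x^3"
proof -
  have "(x^2) powr (3/2) = (x powr 2) powr (3/2)"
    using assms by simp
  also have "\<dots> = x^3"
    unfolding powr_powr using assms by simp
  finally show ?thesis .
qed

lemma cubic_root_near_1_unique:
  fixes s c W1 W2 :: real
  assumes "W1 ^ 3 - s * W1 ^ 2 - W1 + c = 0" "W2 ^ 3 - s * W2 ^ 2 - W2 + c = 0"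
    and "\<bar>W1 - 1\<bar> < 1/10" "\<bar>W2 - 1\<bar> < 1/10" "\<bar>s\<bar> < 1/10"
  shows "W1 = W2"
proof -
  have "(W1 - W2) * (W1^2 + W1 * W2 + W2^2 - s * (W1 + W2) - 1) = 0"
    using assms(1,2) by (simp add: algebra_simps power2_eq_square power3_eq_cube)
  moreover have "W1^2 + W1 * W2 + W2^2 - s * (W1 + W2) - 1 > 0"
  proof -
    have W: "9/10 \<le> W1" "9/10 \<le> W2" "W1 \<le> 11/10" "W2 \<le> 11/10"
      using assms(3,4) unfolding abs_less_iff by auto
    have "W1 * W1 \<ge> 9/10 * (9/10)" "W1 * W2 \<ge> 9/10 * (9/10)" "W2 * W2 \<ge> 9/10 * (9/10)"
      using W by (intro mult_mono; simp)+
    moreover have "\<bar>s * (W1 + W2)\<bar> \<le> 1/10 * (22/10)"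
      unfolding abs_mult using W assms(5) by (intro mult_mono) auto
    ultimately show ?thesis
      by (auto simp: power2_eq_square abs_le_iff)
  qed
  ultimately show ?thesis
    by simp
qed

definition mu_cubic :: "real \<Rightarrow> real \<Rightarrow> real \<Rightarrow> real" where
  "mu_cubic u z W = (let s = v_of u z * (1 - z)^2 in W^3 - s * W^2 - W + s * ((1 + z) / (1 - z))^2)"

definition closed_form_W :: "real \<Rightarrow> real \<Rightarrow> real" where
  "closed_form_W u z = (let v = v_of u z in
     v * (1 - z)^2 / 3 + (2/3) * sqrt (3 + v^2 * (1 - z)^4) * cos (phi_of u z / 3))"

definition phi_arg :: "real \<Rightarrow> real \<Rightarrow> real" where
  "phi_arg u z = (let v = v_of u z in
     (- 9 * v * (1 + 4 * z + z^2) + v^3 * (1 - z)^6) / (3 + v^2 * (1 - z)^4) powr (3/2))"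

lemma phi_of_eq_arccos: "phi_of u z = arccos (phi_arg u z)"
  unfolding phi_of_def phi_arg_def Let_def ..

lemma mu_closed_form_eq: "mu_closed_form u z = (2 / (1 + closed_form_W u z) - 1) / z^2"
  by (simp add: mu_closed_form_def closed_form_W_def Let_def add.assoc)

lemma mu_cubic_closed_form_W:
  assumes "z \<noteq> 1" "\<bar>phi_arg u z\<bar> \<le> 1"
  shows "mu_cubic u z (closed_form_W u z) = 0"
proof -
  define v where "v = v_of u z"
  define s where "s = v * (1 - z)^2"
  define a where "a = ((1 + z) / (1 - z))^2"
  define m where "m = sqrt (3 + s^2) / 3"
  define q where "q = - 2 * s^3 / 27 - s / 3 + s * a"
  have m: "m > 0" "9 * m^2 = 3 + s^2"
    unfolding m_def by (simp_all add: add_pos_nonneg power_divide)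
  have "3 + v^2 * (1 - z)^4 = (3 * m)^2"
    using m(2) by (simp add: s_def power_mult_distrib flip: power_mult)
  then have "(3 + v^2 * (1 - z)^4) powr (3/2) = (3 * m) ^ 3"
    using m(1) by (simp only: power2_powr_three_halves)
  then have arg: "phi_arg u z = - q / (2 * m ^ 3)"
    using assms(1) m(1)
    by (simp add: phi_arg_def Let_def v_def[symmetric] q_def s_def a_def field_simps)
      (simp add: algebra_simps power2_eq_square power3_eq_cube)
  have "closed_form_W u z = s / 3 + 2 * m * cos (phi_of u z / 3)"
    by (simp add: closed_form_W_def Let_def v_def[symmetric] s_def m_def power_mult_distrib flip: power_mult)
  then have W: "closed_form_W u z = s / 3 + 2 * m * cos (arccos (- q / (2 * m ^ 3)) / 3)"
    by (simp add: phi_of_eq_arccos arg)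
  have "\<bar>q\<bar> \<le> 2 * m ^ 3"
    using assms(2) m(1) arg by (simp add: abs_divide divide_le_eq_1)
  then have "(closed_form_W u z - s / 3) ^ 3 - 3 * m ^ 2 * (closed_form_W u z - s / 3) + q = 0"
    unfolding W using cubic_trigonometric_root[OF m(1)] by simp
  moreover have "mu_cubic u z W = (W - s / 3) ^ 3 - 3 * m ^ 2 * (W - s / 3) + q" for W
    using m(2) unfolding mu_cubic_def Let_def v_def[symmetric] s_def[symmetric] a_def[symmetric] q_def
    by algebra
  ultimately show ?thesis
    by simp
qed

lemma mu_cubic_of_mu_equation:
  fixes u z m :: real
  assumes "z \<noteq> 1" "z \<noteq> -1" "1 + m * z^2 \<noteq> 0"
    and "m * ((1 + z) * (1 + z + z^2) * (1 - z)^3 * (1 - m * z^2))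
           = (u - 1) * (1 + z^2) * (1 + m * z) * (1 + m * z^2) * (1 + m * z^3)"
  shows "mu_cubic u z ((1 - m * z^2) / (1 + m * z^2)) = 0"
proof -
  define D where "D = (1 + z) * (1 + z + z^2) * (1 - z)^3"
  define S where "S = (u - 1) * z * (1 + z^2) * (1 - z)^2"
  define K where "K = (u - 1) * z * (1 + z^2) * (1 + z)^2"
  define p where "p = 1 + m * z^2"
  define q where "q = 1 - m * z^2"
  have "1 + z + z^2 = (z + 1/2)^2 + 3/4"
    by (simp add: power2_eq_square algebra_simps)
  moreover have "(z + 1/2)^2 \<ge> 0"
    by simp
  ultimately have "1 + z + z^2 > 0"
    by linarith
  moreover have "1 + z \<noteq> 0" "1 - z \<noteq> 0"
    using assms(1,2) by auto
  ultimately have D: "D \<noteq> 0"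
    by (simp add: D_def)
  have p: "p \<noteq> 0"
    using assms(3) by (simp add: p_def)
  have s: "v_of u z * (1 - z)^2 = S / D"
    and sa: "v_of u z * (1 - z)^2 * ((1 + z) / (1 - z))^2 = K / D"
    using \<open>1 - z \<noteq> 0\<close> by (simp_all add: v_of_def D_def S_def K_def power_divide mult_ac)
  have "mu_cubic u z (q / p) * (D * p^3) = D * q^3 - S * q^2 * p - D * q * p^2 + K * p^3"
    unfolding mu_cubic_def Let_def sa unfolding s using D p
    by (simp add: field_simps power2_eq_square power3_eq_cube)
  also have "\<dots> = -4 * z^2 * (m * (D * q) - (u - 1) * (1 + z^2) * (1 + m * z) * p * (1 + m * z^3))"
    unfolding D_def S_def K_def p_def q_def by algebra
  also have "\<dots> = 0"
    using assms(4) by (simp add: D_def p_def q_def mult_ac)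
  finally show ?thesis
    using D p by (simp add: p_def q_def)
qed

lemma tendsto_v_of: "(f \<longlongrightarrow> 0) F \<Longrightarrow> ((\<lambda>x. v_of u (f x)) \<longlongrightarrow> 0) F"
  unfolding v_of_def by (auto intro!: tendsto_eq_intros)

lemma tendsto_phi_arg: "(f \<longlongrightarrow> 0) F \<Longrightarrow> ((\<lambda>x. phi_arg u (f x)) \<longlongrightarrow> 0) F"
  unfolding phi_arg_def Let_def by (auto intro!: tendsto_eq_intros tendsto_v_of)

lemma tendsto_closed_form_W:
  assumes "(f \<longlongrightarrow> 0) F"
  shows "((\<lambda>x. closed_form_W u (f x)) \<longlongrightarrow> 1) F"
proof -
  have "((\<lambda>x. phi_of u (f x)) \<longlongrightarrow> arccos 0) F"
    unfolding phi_of_eq_arccos using assms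
    by (intro isCont_tendsto_compose[OF isCont_arccos] tendsto_phi_arg) auto
  then have "((\<lambda>x. cos (phi_of u (f x) / 3)) \<longlongrightarrow> cos (arccos 0 / 3)) F"
    by (intro isCont_tendsto_compose[OF isCont_cos] tendsto_divide) auto
  then have cos: "((\<lambda>x. cos (phi_of u (f x) / 3)) \<longlongrightarrow> sqrt 3 / 2) F"
    by (simp add: cos_30)
  have "((\<lambda>x. closed_form_W u (f x))
      \<longlongrightarrow> 0 * (1 - 0)^2 / 3 + (2/3) * sqrt (3 + 0^2 * (1 - 0)^4) * (sqrt 3 / 2)) F"
    unfolding closed_form_W_def Let_def by (intro tendsto_intros tendsto_v_of assms cos) simp
  then show ?thesis
    by simp
qed

lemma mu_closed_form_eqI:
  assumes "z \<noteq> 0" "1 + m * z^2 \<noteq> 0" "closed_form_W u z = (1 - m * z^2) / (1 + m * z^2)"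
  shows "mu_closed_form u z = m"
proof -
  have W: "1 + closed_form_W u z = 2 / (1 + m * z^2)"
    using assms(2,3) by (simp add: field_simps)
  have "2 / (1 + closed_form_W u z) - 1 = m * z^2"
    unfolding W using assms(2) by (simp add: field_simps)
  then show ?thesis
    using assms(1) by (simp add: mu_closed_form_eq)
qed

lemma mu_closed_form_eq_of_roots_near_1:
  fixes u z m :: real
  defines "W \<equiv> (1 - m * z^2) / (1 + m * z^2)"
  assumes "z \<noteq> 0" "\<bar>z\<bar> < 1/2" "\<bar>phi_arg u z\<bar> < 1" "1 + m * z^2 > 0"
    and "\<bar>closed_form_W u z - 1\<bar> < 1/10" "\<bar>W - 1\<bar> < 1/10" "\<bar>v_of u z * (1 - z)^2\<bar> < 1/10"
    and "m * ((1 + z) * (1 + z + z^2) * (1 - z)^3 * (1 - m * z^2))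
           = (u - 1) * (1 + z^2) * (1 + m * z) * (1 + m * z^2) * (1 + m * z^3)"
  shows "mu_closed_form u z = m"
proof -
  have z: "z \<noteq> 1" "z \<noteq> -1"
    using assms(3) by auto
  have "mu_cubic u z (closed_form_W u z) = 0"
    using z assms(4) by (intro mu_cubic_closed_form_W) auto
  moreover have "mu_cubic u z W = 0"
    unfolding W_def using z assms(5,9) by (intro mu_cubic_of_mu_equation) auto
  ultimately have "closed_form_W u z = W"
    unfolding mu_cubic_def Let_def by (rule cubic_root_near_1_unique) (use assms(6-8) in auto)
  then show ?thesis
    using assms(2,5) unfolding W_def by (intro mu_closed_form_eqI) auto
qed

lemma eventually_mu_closed_form_eq:
  fixes z m :: "'a \<Rightarrow> real"
  assumes "(z \<longlongrightarrow> 0) F" "(m \<longlongrightarrow> k) F"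
    and "eventually (\<lambda>x. z x \<noteq> 0 \<and>
           m x * ((1 + z x) * (1 + z x + z x^2) * (1 - z x)^3 * (1 - m x * z x^2))
             = (u - 1) * (1 + z x^2) * (1 + m x * z x) * (1 + m x * z x^2) * (1 + m x * z x^3)) F"
  shows "eventually (\<lambda>x. mu_closed_form u (z x) = m x) F"
proof -
  define W where "W x = (1 - m x * z x^2) / (1 + m x * z x^2)" for x
  have "((\<lambda>x. 1 + m x * z x^2) \<longlongrightarrow> 1 + k * 0^2) F"
    using assms(1,2) by (intro tendsto_intros)
  then have p: "((\<lambda>x. 1 + m x * z x^2) \<longlongrightarrow> 1) F"
    by simp
  have "(W \<longlongrightarrow> (1 - k * 0^2) / (1 + k * 0^2)) F"
    unfolding W_def using assms(1,2) by (intro tendsto_intros) simp_all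
  then have W: "(W \<longlongrightarrow> 1) F"
    by simp
  have "((\<lambda>x. v_of u (z x) * (1 - z x)^2) \<longlongrightarrow> 0 * (1 - 0)^2) F"
    using assms(1) by (intro tendsto_intros tendsto_v_of)
  then have s: "((\<lambda>x. v_of u (z x) * (1 - z x)^2) \<longlongrightarrow> 0) F"
    by simp
  have "\<forall>\<^sub>F x in F. \<bar>z x\<bar> < 1/2"
    using tendstoD[OF assms(1), of "1/2"] by (simp add: dist_real_def)
  moreover have "\<forall>\<^sub>F x in F. \<bar>phi_arg u (z x)\<bar> < 1"
    using tendstoD[OF tendsto_phi_arg[OF assms(1)], of 1] by (simp add: dist_real_def)
  moreover have "\<forall>\<^sub>F x in F. 1 + m x * z x^2 > 0"
    using order_tendstoD(1)[OF p, of 0] by simp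
  moreover have "\<forall>\<^sub>F x in F. \<bar>closed_form_W u (z x) - 1\<bar> < 1/10"
    using tendstoD[OF tendsto_closed_form_W[OF assms(1)], of "1/10"] by (simp add: dist_real_def)
  moreover have "\<forall>\<^sub>F x in F. \<bar>W x - 1\<bar> < 1/10"
    using tendstoD[OF W, of "1/10"] by (simp add: dist_real_def)
  moreover have "\<forall>\<^sub>F x in F. \<bar>v_of u (z x) * (1 - z x)^2\<bar> < 1/10"
    using tendstoD[OF s, of "1/10"] by (simp add: dist_real_def)
  ultimately show ?thesis
    using assms(3) unfolding W_def by eventually_elim (intro mu_closed_form_eq_of_roots_near_1; simp)
qed

section \<open>Evaluating the formal identities\<close>

lemma has_fps_expansion_power [fps_expansion_intros]:
  fixes F :: "'a::{banach, real_normed_div_algebra, comm_ring_1} fps"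
  shows "f has_fps_expansion F \<Longrightarrow> (\<lambda>x. f x ^ n) has_fps_expansion F ^ n"
  by (induction n) (auto intro: has_fps_expansion_mult)

lemma has_fps_expansion_imp_eventually_eq:
  "f has_fps_expansion F \<Longrightarrow> g has_fps_expansion F \<Longrightarrow> \<forall>\<^sub>F x in nhds 0. f x = g x"
  unfolding has_fps_expansion_def by (auto elim: eventually_elim2)

lemma eventually_sums_eval_fps:
  fixes F :: "'a::{banach, real_normed_field} fps"
  assumes "fps_conv_radius F > 0"
  shows "\<forall>\<^sub>F x in at 0. (\<lambda>n. fps_nth F n * x ^ n) sums eval_fps F x"
proof -
  have "\<forall>\<^sub>F x in nhds 0. x \<in> eball 0 (fps_conv_radius F)"
    using assms by (intro eventually_nhds_in_open) (auto simp: zero_ereal_def)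
  then show ?thesis
    unfolding eventually_at_filter by eventually_elim (auto intro: sums_eval_fps)
qed

lemma eventually_mu_closed_form_eval_fps:
  fixes Z \<mu> :: "real fps"
  assumes Z0: "fps_nth Z 0 = 0" and Z: "Z * (1 + Z^2) = fps_X * (1 + Z)^4"
    and \<mu>: "\<mu> * ((1 + Z) * (1 + Z + Z^2) * (1 - Z)^3 * (1 - \<mu> * Z^2))
             = fps_const (u - 1) * (1 + Z^2) * (1 + \<mu> * Z) * (1 + \<mu> * Z^2) * (1 + \<mu> * Z^3)"
    and rad: "fps_conv_radius Z > 0" "fps_conv_radius \<mu> > 0"
  shows "\<forall>\<^sub>F t in at 0. mu_closed_form u (eval_fps Z t) = eval_fps \<mu> t"
proof -
  define z where "z = eval_fps Z"
  define m where "m = eval_fps \<mu>"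
  have exp: "z has_fps_expansion Z" "m has_fps_expansion \<mu>"
    unfolding z_def m_def using rad by (auto intro: eval_fps_has_fps_expansion)
  have "(\<lambda>t. z t * (1 + z t^2)) has_fps_expansion Z * (1 + Z^2)"
    using exp by (intro fps_expansion_intros)
  moreover have "(\<lambda>t. t * (1 + z t)^4) has_fps_expansion Z * (1 + Z^2)"
    unfolding Z using exp by (intro fps_expansion_intros)
  ultimately have Zt: "\<forall>\<^sub>F t in nhds 0. z t * (1 + z t^2) = t * (1 + z t)^4"
    by (rule has_fps_expansion_imp_eventually_eq)
  have "(\<lambda>t. m t * ((1 + z t) * (1 + z t + z t^2) * (1 - z t)^3 * (1 - m t * z t^2)))
          has_fps_expansion \<mu> * ((1 + Z) * (1 + Z + Z^2) * (1 - Z)^3 * (1 - \<mu> * Z^2))"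
    using exp by (intro fps_expansion_intros)
  moreover have "(\<lambda>t. (u - 1) * (1 + z t^2) * (1 + m t * z t) * (1 + m t * z t^2) * (1 + m t * z t^3))
          has_fps_expansion \<mu> * ((1 + Z) * (1 + Z + Z^2) * (1 - Z)^3 * (1 - \<mu> * Z^2))"
    unfolding \<mu> using exp by (intro fps_expansion_intros)
  ultimately have \<mu>t: "\<forall>\<^sub>F t in nhds 0. m t * ((1 + z t) * (1 + z t + z t^2) * (1 - z t)^3 * (1 - m t * z t^2))
      = (u - 1) * (1 + z t^2) * (1 + m t * z t) * (1 + m t * z t^2) * (1 + m t * z t^3)"
    by (rule has_fps_expansion_imp_eventually_eq)
  have "\<forall>\<^sub>F t in at 0. mu_closed_form u (z t) = m t"
  proof (rule eventually_mu_closed_form_eq)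
    have "isCont z 0" "isCont m 0"
      using exp by (auto intro: has_fps_expansion_imp_continuous)
    then show "(z \<longlongrightarrow> 0) (at 0)" "(m \<longlongrightarrow> fps_nth \<mu> 0) (at 0)"
      using Z0 by (simp_all add: isCont_def z_def m_def eval_fps_at_0)
    show "\<forall>\<^sub>F t in at 0. z t \<noteq> 0 \<and> m t * ((1 + z t) * (1 + z t + z t^2) * (1 - z t)^3 * (1 - m t * z t^2))
      = (u - 1) * (1 + z t^2) * (1 + m t * z t) * (1 + m t * z t^2) * (1 + m t * z t^3)"
      unfolding eventually_at_filter using Zt \<mu>t by eventually_elim auto
  qed
  then show ?thesis
    by (simp add: z_def m_def)
qed

theorem proposition5:
  fixes Z \<mu> :: "real fps" and u :: real
  assumes Z0: "fps_nth Z 0 = 0"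
      and Zeq: "Z = fps_X * (1 + Z)^4 / (1 + Z^2)"
      and mueq: "\<mu> = fps_const (u - 1) * (1 + Z^2) * (1 + \<mu> * Z) * (1 + \<mu> * Z^2) * (1 + \<mu> * Z^3)
                   / ((1 + Z) * (1 + Z + Z^2) * (1 - Z)^3 * (1 - \<mu> * Z^2))"
  shows "\<exists>\<epsilon>>0. \<forall>t::real. 0 < \<bar>t\<bar> \<and> \<bar>t\<bar> < \<epsilon> \<longrightarrow>
           (\<exists>z. (\<lambda>n. fps_nth Z n * t^n) sums z \<and>
                (\<lambda>n. fps_nth \<mu> n * t^n) sums mu_closed_form u z)"
proof -
  have Z: "Z * (1 + Z^2) = fps_X * (1 + Z)^4"
    by (rule unit_eq_div2[THEN iffD1, OF _ Zeq]) (simp add: Z0 fps_nth_power_0)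
  have \<mu>: "\<mu> * ((1 + Z) * (1 + Z + Z^2) * (1 - Z)^3 * (1 - \<mu> * Z^2))
             = fps_const (u - 1) * (1 + Z^2) * (1 + \<mu> * Z) * (1 + \<mu> * Z^2) * (1 + \<mu> * Z^3)"
    by (rule unit_eq_div2[THEN iffD1, OF _ mueq]) (simp add: Z0 fps_nth_power_0)
  have rad: "fps_conv_radius Z > 0" "fps_conv_radius \<mu> > 0"
    using fps_conv_radius_Z_mu_pos[OF Z0 Z \<mu>] by auto
  have "\<forall>\<^sub>F t in at 0. (\<lambda>n. fps_nth Z n * t^n) sums eval_fps Z t
                     \<and> (\<lambda>n. fps_nth \<mu> n * t^n) sums mu_closed_form u (eval_fps Z t)"
    using eventually_mu_closed_form_eval_fps[OF Z0 Z \<mu> rad]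
      eventually_sums_eval_fps[OF rad(1)] eventually_sums_eval_fps[OF rad(2)]
    by eventually_elim simp
  then obtain \<epsilon> where "\<epsilon> > 0" and "\<And>t. t \<noteq> 0 \<Longrightarrow> dist t 0 < \<epsilon> \<Longrightarrow>
      (\<lambda>n. fps_nth Z n * t^n) sums eval_fps Z t \<and> (\<lambda>n. fps_nth \<mu> n * t^n) sums mu_closed_form u (eval_fps Z t)"
    unfolding eventually_at by blast
  then show ?thesis
    by (intro exI[of _ \<epsilon>]) (auto simp: dist_real_def)
qed

end
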